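(* Let $E$ be an integral regular elliptic curve (genus $1$) over $\mathbb{F}_q$, let $\mathbf{n}_{m-1}$ be a tuple of positive integers, $Q=q_{\mathbf{n}_{m-1}}$, and let $a$, $\zeta^*$, $v^*_k$, $\beta^*_n$ be as in the context (assuming $\alpha_0\neq0$). Then, as formal power series in $x$ (the infinite product converging coefficientwise), $$\sum_{n=0}^\infty\beta^*_n\,x^n=\prod_{k=1}^\infty\frac{1-aQ^{-k}x+Q^{1-2k}x^2}{(1-Q^{-k}x)(1-Q^{1-k}x)};$$ equivalently, with $x=Q^{-s}$, $\sum_{n\ge0}\beta^*_nQ^{-ns}=\prod_{k\ge1}\zeta^*(s+k)$. Equivalently again, $\beta^*_n=b_n$ for all $n\ge0$, where $\sum_{n\ge0}b_nx^n=\exp\bigl(\sum_{k\ge1}\frac{N_k}{Q^k-1}\frac{x^k}{k}\bigr)$ with $N_k=Q^k+1-\omega_1^k-\omega_2^k$ and $\omega_1,\omega_2$ the roots of $z^2-az+Q$.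
   Context: Let $\zeta_E(s)=\sum_{D\ge 0}N(D)^{-s}$ be the Artin zeta function of $E$ and $\widehat\zeta_E(s)=\zeta_E(s)$ its complete Artin zeta function (genus $1$). Derived zeta functions are defined recursively (here $g=1$). For the empty tuple $\mathbf{n}_{-1}=()$ put $q_{\mathbf{n}_{-1}}=q$, $T_{\mathbf{n}_{-1}}=q^{-s}$, $\widehat\zeta^{(\mathbf{n}_{-1})}_E=\widehat\zeta_E$. For a tuple $\mathbf{n}_m=(n_0,\dots,n_m)$ of positive integers put $\mathbf{n}_{m-1}=(n_0,\dots,n_{m-1})$, $q_{\mathbf{n}_m}=q^{n_0\cdots n_m}$, $T_{\mathbf{n}_m}=q^{-n_0\cdots n_ms}$; with $\widehat Z^{(\mathbf{n}_{m-1})}_E(T_{\mathbf{n}_{m-1}}):=\widehat\zeta^{(\mathbf{n}_{m-1})}_E(s)$, $\widehat\zeta^{(\mathbf{n}_{m-1})}_E(1):=\operatorname{Res}_{T_{\mathbf{n}_{m-1}}=1}\widehat Z^{(\mathbf{n}_{m-1})}_E$, $\widehat v_N=\prod_{k=1}^N\widehat\zeta^{(\mathbf{n}_{m-1})}_E(k)$, $$\widehat\zeta^{(\mathbf{n}_m)}_E(s)=\sum_{a=1}^{n_m}\Biggl(\sum_{\substack{k_1,\dots,k_p>0\\ \sum k_i=n_m-a}}\frac{\widehat v_{k_1}\cdots\widehat v_{k_p}}{\prod_{j=1}^{p-1}(1-q_{\mathbf{n}_{m-1}}^{k_j+k_{j+1}})}\frac{1}{1-q_{\mathbf{n}_{m-1}}^{n_ms-n_m+a+k_p}}\Biggr)\widehat\zeta^{(\mathbf{n}_{m-1})}_E(n_ms-n_m+a)\Biggl(\sum_{\substack{l_1,\dots,l_r>0\\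 \sum l_i=a-1}}\frac{1}{1-q_{\mathbf{n}_{m-1}}^{-n_ms+n_m-a+1+l_1}}\frac{\widehat v_{l_1}\cdots\widehat v_{l_r}}{\prod_{j=1}^{r-1}(1-q_{\mathbf{n}_{m-1}}^{l_j+l_{j+1}})}\Biggr),$$ inner sums over ordered tuples of positive integers, an empty-composition sum being $1$. For the tuple $\mathbf{n}_{m-1}$, with $Q=q_{\mathbf{n}_{m-1}}$ and $T=Q^{-s}$, one can write $\widehat\zeta^{(\mathbf{n}_{m-1})}_E(s)=\alpha_0\cdot\frac{1-aT+QT^2}{(1-T)(1-QT)}$ with numbers $\alpha_0=\alpha^{(\mathbf{n}_{m-1})}_E(0)$ and $a$. Normalization: $\zeta^*(s):=\frac{1-aT+QT^2}{(1-T)(1-QT)}$, $\zeta^*(1):=\operatorname{Res}_{T=1}\zeta^*=\frac{Q+1-a}{Q-1}$, $v^*_k:=\prod_{j=1}^k\zeta^*(j)$, $\beta^*_0:=1$ and for $n\ge1$ $$\beta^*_n:=\sum_{\substack{k_1,\dots,k_p>0\\k_1+\cdots+k_p=n}}\frac{v^*_{k_1}\cdots v^*_{k_p}}{\prod_{j=1}^{p-1}(1-Q^{k_j+k_{j+1}})},$$ which is the $(\mathbf{n}_{m-1},n)$-derived beta invariant of $E$ computed from the normalized function $\zeta^*$. *)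

theory Defs
  imports "HOL-Analysis.Analysis" "HOL-Computational_Algebra.Formal_Power_Series"
begin

text \<open>Normalized zeta function zeta*(s) as a function of T = Q^(-s).\<close>
definition zeta_star_T :: "real \<Rightarrow> real \<Rightarrow> real \<Rightarrow> real" where
  "zeta_star_T Q a T = (1 - a * T + Q * T^2) / ((1 - T) * (1 - Q * T))"

text \<open>Special values zeta*(j), j a positive integer; zeta*(1) is the residue at T = 1.\<close>
definition zeta_star_val :: "real \<Rightarrow> real \<Rightarrow> nat \<Rightarrow> real" where
  "zeta_star_val Q a j =
     (if j = 1 then (Q + 1 - a) / (Q - 1) else zeta_star_T Q a (1 / Q ^ j))"

definition v_star :: "real \<Rightarrow> real \<Rightarrow> nat \<Rightarrow> real" where
  "v_star Q a k = (\<Prod>j = 1..k. zeta_star_val Q a j)"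

definition compositions :: "nat \<Rightarrow> nat list set" where
  "compositions n = {ks. (\<forall>k\<in>set ks. 0 < k) \<and> sum_list ks = n}"

definition beta_star :: "real \<Rightarrow> real \<Rightarrow> nat \<Rightarrow> real" where
  "beta_star Q a n =
     (\<Sum>ks\<in>compositions n.
        (\<Prod>k\<leftarrow>ks. v_star Q a k) /
        (\<Prod>j<length ks - 1. (1 - Q ^ (ks ! j + ks ! (j + 1)))))"

definition prod_factor :: "real \<Rightarrow> real \<Rightarrow> nat \<Rightarrow> real fps" where
  "prod_factor Q a k =
     (1 - fps_const (a / Q ^ k) * fps_X + fps_const (Q / Q ^ (2 * k)) * fps_X ^ 2) *
     inverse ((1 - fps_const (1 / Q ^ k) * fps_X) * (1 - fps_const (Q / Q ^ k) * fps_X))"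

definition prime_power :: "nat \<Rightarrow> bool" where
  "prime_power q = (\<exists>p r. prime p \<and> r > 0 \<and> q = p ^ r)"

end

theory Submission
  imports Defs
begin

text \<open>
  Both sides equal \<open>b_n = beta_rec Q a n\<close>, the coefficients of the unique power series
  \<open>B(x)\<close> with \<open>B(0) = 1\<close> and \<open>B(Qx) (1 - x) (1 - Qx) = B(x) (1 - a x + Q x^2)\<close>.

  Product side: the \<open>k\<close>-th factor is \<open>f_k(x) = f_0(x / Q^k)\<close>, so the partial products satisfy
  \<open>P_K(Qx) f_K(x) = f_0(x) P_K(x)\<close>. As \<open>f_K \<longrightarrow> 1\<close> coefficientwise, this tends to the
  equation for \<open>B\<close>, which determines the coefficients one at a time because \<open>Q^n \<noteq> 1\<close>;
  hence the coefficients of \<open>P_K\<close> converge to \<open>b_n\<close>.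

  Composition side: replacing the first denominator of the composition sum by \<open>1 - t Q^k_1\<close>
  gives a rational function \<open>G_n(t)\<close> with \<open>G_n(0) = \<beta>*_n\<close> and the partial fraction
  expansion \<open>G_n(t) = \<Sum>_k v*_k G_(n-k)(Q^k) / (1 - t Q^k)\<close>. By strong induction on \<open>n\<close>,
  \<open>G_n(t) = \<Phi>_n(t) / \<Prod>_(j=1..n) (1 - t Q^j)\<close>, where \<open>\<Phi>_n(t)\<close> is the coefficient of \<open>x^n\<close>
  in \<open>B(x) \<Prod>_(j=1..n-1) (1 - t Q^j x)\<close>: both sides satisfy the same relation between
  \<open>G_(n+1)(t)\<close>, \<open>G_n(t)\<close> and \<open>G_n(Qt)\<close>. Setting \<open>t = 0\<close> gives \<open>\<beta>*_n = b_n\<close>.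
\<close>

section \<open>Power series determined by a dilation equation\<close>

lemma power_ne_1_of_gt_1:
  fixes Q :: real
  assumes "1 < Q" "0 < k"
  shows "1 - Q ^ k \<noteq> 0" "Q ^ k - 1 \<noteq> 0"
  using one_less_power[OF assms] by simp_all

lemma fps_mult_quadratic_nth:
  fixes f :: "'a::comm_ring_1 fps"
  shows "fps_nth (f * (1 - fps_const b * fps_X + fps_const c * fps_X ^ 2)) n =
    fps_nth f n - (if n = 0 then 0 else b * fps_nth f (n - 1))
      + (if n < 2 then 0 else c * fps_nth f (n - 2))"
proof -
  have "f * (1 - fps_const b * fps_X + fps_const c * fps_X ^ 2) =
      f - fps_const b * (f * fps_X) + fps_const c * (f * fps_X ^ 2)"
    by (simp add: algebra_simps)
  then show ?thesis
    by (simp add: fps_X_power_mult_right_nth)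
qed

lemma fps_quadratic_nth:
  "fps_nth (1 - fps_const b * fps_X + fps_const c * fps_X ^ 2 :: 'a::comm_ring_1 fps) n =
    (if n = 0 then 1 else if n = 1 then - b else if n = 2 then c else 0)"
  using fps_mult_quadratic_nth[of 1 b c n] by simp

lemma fps_linear_mult_linear:
  "(1 - fps_const u * fps_X) * (1 - fps_const v * fps_X :: 'a::comm_ring_1 fps) =
    1 - fps_const (u + v) * fps_X + fps_const (u * v) * fps_X ^ 2"
  by (simp add: algebra_simps power2_eq_square flip: fps_const_add fps_const_mult)

lemma fps_quadratic_compose_linear:
  "(1 - fps_const b * fps_X + fps_const c * fps_X ^ 2 :: 'a::comm_ring_1 fps) oo (fps_const s * fps_X) =
    1 - fps_const (b * s) * fps_X + fps_const (c * s ^ 2) * fps_X ^ 2"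
proof (rule fps_ext)
  fix n :: nat
  consider "n = 0" | "n = 1" | "n = 2" | "n > 2" by linarith
  then show "fps_nth ((1 - fps_const b * fps_X + fps_const c * fps_X ^ 2) oo (fps_const s * fps_X)) n =
      fps_nth (1 - fps_const (b * s) * fps_X + fps_const (c * s ^ 2) * fps_X ^ 2) n"
    unfolding fps_nth_compose_linear by cases (simp_all add: fps_quadratic_nth)
qed

abbreviation fps_dilate :: "'a::comm_ring_1 \<Rightarrow> 'a fps \<Rightarrow> 'a fps" where
  "fps_dilate c f \<equiv> f oo (fps_const c * fps_X)"

lemma fps_dilate_functional_eq_nth:
  fixes P F G :: "'a::field fps"
  assumes "fps_dilate c P * F = P * G" "fps_nth F 0 = 1" "fps_nth G 0 = 1"
  shows "(c ^ n - 1) * fps_nth P n =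
    (\<Sum>i<n. fps_nth P i * (fps_nth G (n - i) - c ^ i * fps_nth F (n - i)))"
proof -
  have "(\<Sum>i\<le>n. c ^ i * fps_nth P i * fps_nth F (n - i)) = (\<Sum>i\<le>n. fps_nth P i * fps_nth G (n - i))"
    using arg_cong[OF assms(1), of "\<lambda>f. fps_nth f n"] by (simp add: fps_mult_nth atLeast0AtMost)
  moreover have "\<And>f :: nat \<Rightarrow> 'a. (\<Sum>i\<le>n. f i) = (\<Sum>i<n. f i) + f n"
    by (simp flip: lessThan_Suc_atMost)
  ultimately show ?thesis
    using assms(2,3) by (simp add: sum_subtractf algebra_simps sum_distrib_left)
qed

lemma tendsto_fps_nth_functional_eq:
  fixes P F G :: "nat \<Rightarrow> 'a::real_normed_field fps" and R F' G' :: "'a fps"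
  assumes eq: "\<And>K. fps_dilate c (P K) * F K = P K * G K"
    and eq': "fps_dilate c R * F' = R * G'"
    and F0: "\<And>K. fps_nth (F K) 0 = 1" and G0: "\<And>K. fps_nth (G K) 0 = 1"
    and P0: "\<And>K. fps_nth (P K) 0 = fps_nth R 0"
    and F: "\<And>i. (\<lambda>K. fps_nth (F K) i) \<longlonglongrightarrow> fps_nth F' i"
    and G: "\<And>i. (\<lambda>K. fps_nth (G K) i) \<longlonglongrightarrow> fps_nth G' i"
    and c: "\<And>n. 0 < n \<Longrightarrow> c ^ n \<noteq> 1"
  shows "(\<lambda>K. fps_nth (P K) n) \<longlonglongrightarrow> fps_nth R n"
proof (induction n rule: less_induct)
  case (less n)
  show ?case
  proof (cases "n = 0")
    case True
    then show ?thesis by (simp add: P0)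
  next
    case False
    have F'0: "fps_nth F' 0 = 1" and G'0: "fps_nth G' 0 = 1"
      using LIMSEQ_unique[OF F[of 0]] LIMSEQ_unique[OF G[of 0]] by (simp_all add: F0 G0)
    let ?rhs = "\<lambda>P F G. (\<Sum>i<n. fps_nth P i * (fps_nth G (n - i) - c ^ i * fps_nth F (n - i))) / (c ^ n - 1)"
    have cn: "c ^ n - 1 \<noteq> 0" using c[of n] False by simp
    have "(\<lambda>K. ?rhs (P K) (F K) (G K)) \<longlonglongrightarrow> ?rhs R F' G'"
      by (intro tendsto_intros less.IH F G) (use cn in auto)
    moreover have "fps_nth (P K) n = ?rhs (P K) (F K) (G K)" for K
      using fps_dilate_functional_eq_nth[OF eq[of K] F0[of K] G0[of K], of n] cn by (simp add: field_simps)
    moreover have "fps_nth R n = ?rhs R F' G'"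
      using fps_dilate_functional_eq_nth[OF eq' F'0 G'0, of n] cn by (simp add: field_simps)
    ultimately show ?thesis by simp
  qed
qed

lemma tendsto_fps_mult_nth:
  fixes F G :: "nat \<Rightarrow> 'a::real_normed_field fps"
  assumes "\<And>i. (\<lambda>K. fps_nth (F K) i) \<longlonglongrightarrow> fps_nth F' i"
    and "\<And>i. (\<lambda>K. fps_nth (G K) i) \<longlonglongrightarrow> fps_nth G' i"
  shows "(\<lambda>K. fps_nth (F K * G K) n) \<longlonglongrightarrow> fps_nth (F' * G') n"
  unfolding fps_mult_nth by (intro tendsto_sum tendsto_mult assms)

lemma tendsto_fps_quadratic_nth:
  fixes b c :: "nat \<Rightarrow> 'a::real_normed_field"
  assumes "b \<longlonglongrightarrow> 0" "c \<longlonglongrightarrow> 0"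
  shows "(\<lambda>K. fps_nth (1 - fps_const (b K) * fps_X + fps_const (c K) * fps_X ^ 2) i) \<longlonglongrightarrow> fps_nth 1 i"
proof -
  consider "i = 0" | "i = 1" | "i = 2" | "i > 2" by linarith
  then show ?thesis
    by cases (use tendsto_minus[OF assms(1)] assms(2) in \<open>simp_all add: fps_quadratic_nth\<close>)
qed

lemma tendsto_const_divide_power:
  fixes Q :: real
  assumes "1 < Q" "0 < m"
  shows "(\<lambda>K. c / Q ^ (m * K)) \<longlonglongrightarrow> 0"
proof -
  have "(\<lambda>K. c * inverse ((Q ^ m) ^ K)) \<longlonglongrightarrow> c * 0"
    using assms by (intro tendsto_mult tendsto_const LIMSEQ_inverse_realpow_zero one_less_power)
  then show ?thesis
    by (simp add: power_mult divide_inverse)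
qed

section \<open>Compositions\<close>

lemma compositions_0: "compositions 0 = {[]}"
proof -
  have "ks = []" if "ks \<in> compositions 0" for ks
    using that by (cases ks) (auto simp: compositions_def)
  then show ?thesis by (auto simp: compositions_def)
qed

lemma compositions_Cons:
  assumes "0 < n"
  shows "compositions n = (\<Union>k\<in>{1..n}. (#) k ` compositions (n - k))"
proof (intro equalityI subsetI)
  fix ks assume ks: "ks \<in> compositions n"
  with assms obtain k ks' where "ks = k # ks'"
    by (cases ks) (auto simp: compositions_def)
  with ks show "ks \<in> (\<Union>k\<in>{1..n}. (#) k ` compositions (n - k))"
    by (auto simp: compositions_def intro!: bexI[of _ k])
qed (auto simp: compositions_def)

lemma finite_compositions: "finite (compositions n)"
proof (induction n rule: less_induct)
  case (less n)
  then show ?case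
    by (cases "n = 0") (simp_all add: compositions_0 compositions_Cons)
qed

lemma sum_compositions_Cons:
  assumes "0 < n"
  shows "(\<Sum>ks\<in>compositions n. g ks) = (\<Sum>k = 1..n. \<Sum>ks\<in>compositions (n - k). g (k # ks))"
  unfolding compositions_Cons[OF assms]
  by (subst sum.UNION_disjoint) (auto simp: finite_compositions sum.reindex)

section \<open>The infinite product\<close>

fun beta_rec :: "real \<Rightarrow> real \<Rightarrow> nat \<Rightarrow> real" where
  "beta_rec Q a 0 = 1"
| "beta_rec Q a (Suc 0) = (Q + 1 - a) / (Q - 1)"
| "beta_rec Q a (Suc (Suc n)) =
     ((Q ^ (n + 1) + Q ^ (n + 2) - a) * beta_rec Q a (Suc n) + (Q - Q ^ (n + 1)) * beta_rec Q a n)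
     / (Q ^ (n + 2) - 1)"

declare beta_rec.simps(3) [simp del]

lemma beta_rec_recurrence:
  assumes "1 < Q"
  shows "(1 - Q ^ (n + 2)) * beta_rec Q a (n + 2) =
    (a - Q ^ (n + 1) - Q ^ (n + 2)) * beta_rec Q a (n + 1) - Q * (1 - Q ^ n) * beta_rec Q a n"
  using power_ne_1_of_gt_1[OF assms, of "n + 2"] by (simp add: field_simps beta_rec.simps(3))

definition zeta_num :: "real \<Rightarrow> real \<Rightarrow> nat \<Rightarrow> real fps" where
  "zeta_num Q a k = 1 - fps_const (a / Q ^ k) * fps_X + fps_const (Q / Q ^ (2 * k)) * fps_X ^ 2"

definition zeta_den :: "real \<Rightarrow> nat \<Rightarrow> real fps" where
  "zeta_den Q k = (1 - fps_const (1 / Q ^ k) * fps_X) * (1 - fps_const (Q / Q ^ k) * fps_X)"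

lemma prod_factor_eq: "prod_factor Q a k = zeta_num Q a k * inverse (zeta_den Q k)"
  by (simp add: prod_factor_def zeta_num_def zeta_den_def)

lemma zeta_den_quadratic:
  "zeta_den Q k = 1 - fps_const ((1 + Q) / Q ^ k) * fps_X + fps_const (Q / Q ^ (2 * k)) * fps_X ^ 2"
  unfolding zeta_den_def fps_linear_mult_linear by (simp add: add_divide_distrib mult_2 power_add)

lemma zeta_den_nth_0 [simp]: "fps_nth (zeta_den Q k) 0 = 1"
  by (simp add: zeta_den_def)

lemma zeta_num_dilate:
  assumes "Q \<noteq> 0"
  shows "fps_dilate Q (zeta_num Q a (Suc k)) = zeta_num Q a k"
  unfolding zeta_num_def fps_quadratic_compose_linear using assms by (simp add: power2_eq_square)

lemma zeta_den_dilate: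
  assumes "Q \<noteq> 0"
  shows "fps_dilate Q (zeta_den Q (Suc k)) = zeta_den Q k"
  unfolding zeta_den_quadratic fps_quadratic_compose_linear using assms by (simp add: power2_eq_square)

lemma prod_factor_dilate:
  assumes "Q \<noteq> 0"
  shows "fps_dilate Q (prod_factor Q a (Suc k)) = prod_factor Q a k"
  by (simp add: prod_factor_eq fps_compose_mult_distrib fps_inverse_compose
      zeta_num_dilate zeta_den_dilate assms)

lemma prod_factor_mult_zeta_den: "prod_factor Q a k * zeta_den Q k = zeta_num Q a k"
  by (simp add: prod_factor_eq inverse_mult_eq_1 mult.assoc)

lemma prod_factor_prod_nth_0: "fps_nth (\<Prod>k\<in>A. prod_factor Q a k) 0 = 1"
  by (induction A rule: infinite_finite_induct) (simp_all add: prod_factor_eq zeta_num_def)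

lemma partial_product_functional_eq:
  fixes Q a :: real and K :: nat
  assumes "Q \<noteq> 0"
  defines "P \<equiv> \<Prod>k = 1..K. prod_factor Q a k"
  shows "fps_dilate Q P * (zeta_num Q a K * zeta_den Q 0) = P * (zeta_num Q a 0 * zeta_den Q K)"
proof -
  have P_shift: "P = (\<Prod>k<K. prod_factor Q a (Suc k))"
    unfolding P_def by (simp add: prod.atLeast1_atMost_eq)
  then have "fps_dilate Q P = (\<Prod>k<K. prod_factor Q a k)"
    using assms by (simp add: fps_compose_prod_distrib prod_factor_dilate)
  then have telescope: "fps_dilate Q P * prod_factor Q a K = prod_factor Q a 0 * P"
    unfolding P_shift by (simp add: prod.lessThan_Suc_shift flip: prod.lessThan_Suc)
  have "fps_dilate Q P * (zeta_num Q a K * zeta_den Q 0) =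
      (fps_dilate Q P * prod_factor Q a K) * zeta_den Q K * zeta_den Q 0"
    by (simp add: prod_factor_mult_zeta_den[symmetric] mult.assoc)
  also have "\<dots> = P * (prod_factor Q a 0 * zeta_den Q 0) * zeta_den Q K"
    unfolding telescope by (simp only: ac_simps)
  finally show ?thesis
    by (simp add: prod_factor_mult_zeta_den mult.assoc)
qed

lemma beta_rec_functional_eq:
  assumes "1 < Q"
  shows "fps_dilate Q (Abs_fps (beta_rec Q a)) * zeta_den Q 0 = Abs_fps (beta_rec Q a) * zeta_num Q a 0"
proof (rule fps_ext)
  fix n :: nat
  consider "n = 0" | "n = 1" | m where "n = m + 2"
    by (metis One_nat_def add_2_eq_Suc' not0_implies_Suc)
  then show "fps_nth (fps_dilate Q (Abs_fps (beta_rec Q a)) * zeta_den Q 0) n =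
      fps_nth (Abs_fps (beta_rec Q a) * zeta_num Q a 0) n"
  proof cases
    case 2
    have "Q - 1 \<noteq> 0" using assms by simp
    then show ?thesis
      unfolding 2 zeta_den_quadratic zeta_num_def fps_mult_quadratic_nth fps_nth_compose_linear
      by (simp add: field_simps)
  next
    case 3
    have "Q ^ (m + 2) * beta_rec Q a (m + 2) - (1 + Q) * (Q ^ (m + 1) * beta_rec Q a (m + 1))
        + Q * (Q ^ m * beta_rec Q a m) = beta_rec Q a (m + 2) - a * beta_rec Q a (m + 1) + Q * beta_rec Q a m"
      using beta_rec_recurrence[OF assms, of m a] by (simp add: algebra_simps)
    then show ?thesis
      unfolding 3 zeta_den_quadratic zeta_num_def fps_mult_quadratic_nth fps_nth_compose_linear
      by (simp add: mult.assoc)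
  qed (simp add: zeta_den_quadratic zeta_num_def fps_mult_quadratic_nth)
qed

lemma zeta_num_nth_tendsto:
  assumes "1 < Q"
  shows "(\<lambda>K. fps_nth (zeta_num Q a K) i) \<longlonglongrightarrow> fps_nth 1 i"
  unfolding zeta_num_def
  using tendsto_const_divide_power[OF assms, of 1 a] tendsto_const_divide_power[OF assms, of 2 Q]
  by (intro tendsto_fps_quadratic_nth) simp_all

lemma zeta_den_nth_tendsto:
  assumes "1 < Q"
  shows "(\<lambda>K. fps_nth (zeta_den Q K) i) \<longlonglongrightarrow> fps_nth 1 i"
  unfolding zeta_den_quadratic
  using tendsto_const_divide_power[OF assms, of 1 "1 + Q"] tendsto_const_divide_power[OF assms, of 2 Q]
  by (intro tendsto_fps_quadratic_nth) simp_all

theorem partial_product_tendsto_beta_rec: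
  assumes Q: "1 < Q"
  shows "(\<lambda>K. fps_nth (\<Prod>k = 1..K. prod_factor Q a k) n) \<longlonglongrightarrow> beta_rec Q a n"
proof -
  have "(\<lambda>K. fps_nth (\<Prod>k = 1..K. prod_factor Q a k) n) \<longlonglongrightarrow> fps_nth (Abs_fps (beta_rec Q a)) n"
  proof (rule tendsto_fps_nth_functional_eq)
    show "fps_dilate Q (\<Prod>k = 1..K. prod_factor Q a k) * (zeta_num Q a K * zeta_den Q 0) =
        (\<Prod>k = 1..K. prod_factor Q a k) * (zeta_num Q a 0 * zeta_den Q K)" for K
      using Q by (intro partial_product_functional_eq) simp
    show "fps_dilate Q (Abs_fps (beta_rec Q a)) * (1 * zeta_den Q 0) = Abs_fps (beta_rec Q a) * (zeta_num Q a 0 * 1)"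
      using beta_rec_functional_eq[OF Q] by simp
    show "(\<lambda>K. fps_nth (zeta_num Q a K * zeta_den Q 0) i) \<longlonglongrightarrow> fps_nth (1 * zeta_den Q 0) i" for i
      by (intro tendsto_fps_mult_nth zeta_num_nth_tendsto[OF Q] tendsto_const)
    show "(\<lambda>K. fps_nth (zeta_num Q a 0 * zeta_den Q K) i) \<longlonglongrightarrow> fps_nth (zeta_num Q a 0 * 1) i" for i
      by (intro tendsto_fps_mult_nth zeta_den_nth_tendsto[OF Q] tendsto_const)
    show "Q ^ n \<noteq> 1" if "0 < n" for n
      using power_ne_1_of_gt_1[OF Q that] by simp
  qed (simp_all add: prod_factor_prod_nth_0 zeta_num_def)
  then show ?thesis by simp
qed

section \<open>The composition sums\<close>

definition composition_weight :: "real \<Rightarrow> real \<Rightarrow> nat list \<Rightarrow> real" where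
  "composition_weight Q a ks =
     (\<Prod>k\<leftarrow>ks. v_star Q a k) / (\<Prod>j<length ks - 1. (1 - Q ^ (ks ! j + ks ! (j + 1))))"

lemma beta_star_eq_sum_weights: "beta_star Q a n = (\<Sum>ks\<in>compositions n. composition_weight Q a ks)"
  unfolding beta_star_def composition_weight_def ..

lemma composition_weight_Nil [simp]: "composition_weight Q a [] = 1"
  by (simp add: composition_weight_def)

lemma composition_weight_Cons:
  "composition_weight Q a (k # ks) =
    v_star Q a k * composition_weight Q a ks * (if ks = [] then 1 else 1 / (1 - Q ^ (k + hd ks)))"
proof (cases ks)
  case (Cons h t)
  have "(\<Prod>j<length (k # ks) - 1. 1 - Q ^ ((k # ks) ! j + (k # ks) ! (j + 1))) =
      (1 - Q ^ (k + h)) * (\<Prod>j<length ks - 1. 1 - Q ^ (ks ! j + ks ! (j + 1)))"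
    using Cons by (simp del: prod.lessThan_Suc add: prod.lessThan_Suc_shift)
  then show ?thesis
    using Cons by (simp add: composition_weight_def)
qed (simp add: composition_weight_def)

text \<open>The right-hand inner sum in the definition of the derived zeta function, with
  \<open>Q^(-n s + n - a + 1)\<close> replaced by a variable \<open>t\<close>.\<close>

definition beta_star_shift :: "real \<Rightarrow> real \<Rightarrow> nat \<Rightarrow> real \<Rightarrow> real" where
  "beta_star_shift Q a n t =
     (\<Sum>ks\<in>compositions n.
        composition_weight Q a ks * (if ks = [] then 1 else 1 / (1 - t * Q ^ hd ks)))"

lemma beta_star_shift_at_0: "beta_star_shift Q a n 0 = beta_star Q a n"
  by (simp add: beta_star_shift_def beta_star_eq_sum_weights cong: if_cong)

lemma beta_star_shift_0 [simp]: "beta_star_shift Q a 0 t = 1"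
  by (simp add: beta_star_shift_def compositions_0)

lemma beta_star_shift_rec:
  assumes "0 < n"
  shows "beta_star_shift Q a n t =
    (\<Sum>k = 1..n. v_star Q a k * beta_star_shift Q a (n - k) (Q ^ k) / (1 - t * Q ^ k))"
  unfolding beta_star_shift_def sum_compositions_Cons[OF assms]
  by (intro sum.cong refl)
    (simp add: composition_weight_Cons power_add sum_distrib_left sum_divide_distrib mult_ac cong: if_cong)

definition qpoch :: "real \<Rightarrow> nat \<Rightarrow> real \<Rightarrow> real" where
  "qpoch Q n t = (\<Prod>j = 1..n. 1 - t * Q ^ j)"

lemma qpoch_0 [simp]: "qpoch Q 0 t = 1"
  by (simp add: qpoch_def)

lemma qpoch_Suc: "qpoch Q (Suc n) t = qpoch Q n t * (1 - t * Q ^ Suc n)"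
  by (simp add: qpoch_def)

lemma qpoch_Suc_shift: "qpoch Q (Suc n) t = (1 - t * Q) * qpoch Q n (Q * t)"
proof -
  have "qpoch Q (Suc n) t = (1 - t * Q ^ 1) * (\<Prod>j = Suc 1..Suc n. 1 - t * Q ^ j)"
    unfolding qpoch_def by (rule prod.atLeast_Suc_atMost) simp
  also have "(\<Prod>j = Suc 1..Suc n. 1 - t * Q ^ j) = qpoch Q n (Q * t)"
    unfolding qpoch_def prod.shift_bounds_cl_Suc_ivl by (simp add: mult_ac)
  finally show ?thesis by simp
qed

lemma qpoch_nonzero_iff: "qpoch Q n t \<noteq> 0 \<longleftrightarrow> (\<forall>k\<in>{1..n}. 1 - t * Q ^ k \<noteq> 0)"
  by (simp add: qpoch_def)

lemma qpoch_power_nonzero: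
  assumes "1 < Q"
  shows "qpoch Q n (Q ^ k) \<noteq> 0"
  using power_ne_1_of_gt_1(1)[OF assms, of "k + _"] by (simp add: qpoch_nonzero_iff power_add)

lemma qpoch_nonzero_near_0:
  assumes Q: "1 < Q" and t: "\<bar>t\<bar> < 1 / Q ^ n"
  shows "qpoch Q n t \<noteq> 0"
  unfolding qpoch_nonzero_iff
proof
  fix k assume "k \<in> {1..n}"
  then have "Q ^ k \<le> Q ^ n"
    using Q by (intro power_increasing) auto
  have "\<bar>t * Q ^ k\<bar> = \<bar>t\<bar> * Q ^ k"
    using Q by (simp add: abs_mult)
  also have "\<dots> < 1 / Q ^ n * Q ^ k"
    using t Q by (intro mult_strict_right_mono) auto
  also have "\<dots> \<le> 1"
    using \<open>Q ^ k \<le> Q ^ n\<close> Q by (simp add: field_simps)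
  finally show "1 - t * Q ^ k \<noteq> 0"
    by auto
qed

text \<open>The coefficients of \<open>qpoch Q N t\<close> as a polynomial in \<open>t\<close> (by the \<open>q\<close>-binomial
  theorem); only their ratio recurrence is used below.\<close>

fun qpoch_coeff :: "real \<Rightarrow> nat \<Rightarrow> nat \<Rightarrow> real" where
  "qpoch_coeff Q N 0 = 1"
| "qpoch_coeff Q N (Suc l) = qpoch_coeff Q N l * (- (Q ^ Suc l)) * (1 - Q ^ (N - l)) / (1 - Q ^ Suc l)"

declare qpoch_coeff.simps(2) [simp del]

lemma qpoch_coeff_eq_0: "N < l \<Longrightarrow> qpoch_coeff Q N l = 0"
  by (induction l) (auto simp: less_Suc_eq qpoch_coeff.simps(2))

lemma qpoch_coeff_Suc_Suc:
  assumes "1 < Q"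
  shows "qpoch_coeff Q (Suc N) (Suc l) = - (Q ^ Suc l) * (1 - Q ^ Suc N) / (1 - Q ^ Suc l) * qpoch_coeff Q N l"
proof (induction l)
  case (Suc l)
  have "qpoch_coeff Q (Suc N) (Suc (Suc l)) =
      qpoch_coeff Q (Suc N) (Suc l) * (- (Q ^ Suc (Suc l))) * (1 - Q ^ (N - l)) / (1 - Q ^ Suc (Suc l))"
    by (simp add: qpoch_coeff.simps(2))
  also have "\<dots> = - (Q ^ Suc (Suc l)) * (1 - Q ^ Suc N) / (1 - Q ^ Suc (Suc l))
      * (qpoch_coeff Q N l * (- (Q ^ Suc l)) * (1 - Q ^ (N - l)) / (1 - Q ^ Suc l))"
    unfolding Suc.IH by (simp add: divide_inverse algebra_simps)
  finally show ?case by (simp add: qpoch_coeff.simps(2))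
qed (simp add: qpoch_coeff.simps(2))

text \<open>\<open>shift_numer Q a n\<close> is the numerator \<open>\<Phi>_n\<close> of the closed form of
  \<open>beta_star_shift Q a n\<close>.\<close>

definition shift_numer_coeff :: "real \<Rightarrow> real \<Rightarrow> nat \<Rightarrow> nat \<Rightarrow> real" where
  "shift_numer_coeff Q a n l = qpoch_coeff Q (n - 1) l * beta_rec Q a (n - l)"

definition shift_numer :: "real \<Rightarrow> real \<Rightarrow> nat \<Rightarrow> real \<Rightarrow> real" where
  "shift_numer Q a n t = (\<Sum>l\<le>n. shift_numer_coeff Q a n l * t ^ l)"

lemma shift_numer_coeff_eq_0: "n < l \<Longrightarrow> shift_numer_coeff Q a n l = 0"
  unfolding shift_numer_coeff_def by (cases n) (auto simp: qpoch_coeff_eq_0)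

lemma shift_numer_0 [simp]: "shift_numer Q a 0 t = 1"
  by (simp add: shift_numer_def shift_numer_coeff_def)

lemma shift_numer_at_0: "shift_numer Q a n 0 = beta_rec Q a n"
  by (simp add: shift_numer_def shift_numer_coeff_def zero_power sum.atMost_shift del: sum.atMost_Suc)

lemma shift_numer_coeff_rec_core:
  fixes Q a X Y y c \<gamma> b0 b1 b2 :: real
  assumes c: "c * (1 - X) = - X * \<gamma>" and Y: "Y = Q * y"
    and rec: "(1 - Q * Y) * b2 = (a - Y - Q * Y) * b1 - Q * (1 - y) * b0"
  shows "(1 - Q * X * Y) * (c * (1 - X * Y)) * b2 =
    c * (1 - Y) * (- (Q * X)) * (1 - y) * b0 + c * (1 - Y) * b1 * (a * X - (X * Y + Q * X * Y))
    + \<gamma> * b2 * (Q * X^2 * Y^2 - X)"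
  using c Y rec by algebra

lemma shift_numer_coeff_rec_interior:
  assumes Q: "1 < Q" and N: "N = Suc M" and M: "M = i + 1 + m" and j: "j = Suc i"
  shows "(1 - Q ^ (N + 1)) * shift_numer_coeff Q a (N + 1) j =
    shift_numer_coeff Q a N (j + 1) * (1 - Q ^ (j + 1))
    + shift_numer_coeff Q a N j * (a * Q ^ j - (Q ^ N + Q ^ (N + 1)))
    + shift_numer_coeff Q a N (j - 1) * (Q ^ (2 * N + 1) - Q ^ j)"
proof -
  let ?c = "qpoch_coeff Q" and ?b = "beta_rec Q a"
  define X where "X = Q ^ Suc i"
  define y where "y = Q ^ m"
  define Y where "Y = Q ^ Suc m"
  define c where "c = - X * ?c M i / (1 - X)"
  \<comment> \<open>the four coefficients involved are multiples of \<open>c\<close>\<close>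
  have X1: "1 - X \<noteq> 0" "1 - Q * X \<noteq> 0"
    unfolding X_def using power_ne_1_of_gt_1(1)[OF Q, of "Suc i"] power_ne_1_of_gt_1(1)[OF Q, of "Suc (Suc i)"]
    by simp_all
  have pow: "Q ^ (N + 1) = Q * X * Y" "Q ^ (j + 1) = Q * X" "Q ^ j = X" "Q ^ N = X * Y"
    "Q ^ (2 * N + 1) = Q * X ^ 2 * Y ^ 2"
    unfolding X_def Y_def j N M by (simp_all add: power_add power_mult power2_eq_square ac_simps)
  have coeffs: "shift_numer_coeff Q a (N + 1) j = ?c (M + 1) (i + 1) * ?b (m + 2)"
    "shift_numer_coeff Q a N (j + 1) = ?c M (i + 2) * ?b m"
    "shift_numer_coeff Q a N j = ?c M (i + 1) * ?b (m + 1)"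
    "shift_numer_coeff Q a N (j - 1) = ?c M i * ?b (m + 2)"
    unfolding shift_numer_coeff_def j N M by (simp_all add: Suc_diff_Suc)
  have "?c (M + 1) (i + 1) = - X * (1 - Q ^ Suc M) / (1 - X) * ?c M i"
    using qpoch_coeff_Suc_Suc[OF Q, of M i] by (simp add: X_def)
  moreover have "Q ^ Suc M = X * Y"
    using pow(4) N by simp
  ultimately have c1: "c * (1 - X * Y) = ?c (M + 1) (i + 1)"
    unfolding c_def by simp
  have c2: "c * (1 - Y) = ?c M (i + 1)"
    unfolding c_def X_def Y_def M by (simp add: qpoch_coeff.simps(2))
  have c3: "?c M (i + 1) * (- (Q * X)) * (1 - y) = ?c M (i + 2) * (1 - Q * X)"
    using X1(2) unfolding X_def y_def M by (simp add: qpoch_coeff.simps(2))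
  have Y: "Y = Q * y"
    unfolding Y_def y_def by simp
  have rec: "(1 - Q * Y) * ?b (m + 2) = (a - Y - Q * Y) * ?b (m + 1) - Q * (1 - y) * ?b m"
    using beta_rec_recurrence[OF Q, of m a] unfolding Y_def y_def by (simp add: ac_simps)
  have c0: "c * (1 - X) = - X * ?c M i"
    unfolding c_def using X1(1) by simp
  show ?thesis
    using shift_numer_coeff_rec_core[OF c0 Y rec] j
    unfolding coeffs pow c1 c2 c3 by (simp add: algebra_simps)
qed

lemma shift_numer_coeff_rec:
  assumes Q: "1 < Q"
  shows "(1 - Q ^ (N + 1)) * shift_numer_coeff Q a (N + 1) j =
    shift_numer_coeff Q a N (j + 1) * (1 - Q ^ (j + 1))
    + shift_numer_coeff Q a N j * (a * Q ^ j - (Q ^ N + Q ^ (N + 1)))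
    + (if j = 0 then 0 else shift_numer_coeff Q a N (j - 1) * (Q ^ (2 * N + 1) - Q ^ j))"
proof (cases N)
  case 0
  have "Q - 1 \<noteq> 0" using Q by simp
  consider "j = 0" | "j = 1" | "j \<ge> 2" by linarith
  then show ?thesis
    using 0 \<open>Q - 1 \<noteq> 0\<close> by cases (simp_all add: shift_numer_coeff_def field_simps qpoch_coeff_eq_0 qpoch_coeff.simps(2))
next
  case (Suc M)
  let ?c = "qpoch_coeff Q" and ?b = "beta_rec Q a"
  consider "j = 0" | i where "j = Suc i" "M < i" | "j = Suc M" | i where "j = Suc i" "i < M"
    by (metis linorder_neqE_nat not0_implies_Suc)
  then show ?thesis
  proof cases
    case 1
    have "?c M 1 * (1 - Q) = - Q * (1 - Q ^ M)"
      using power_ne_1_of_gt_1(1)[OF Q, of 1] by (simp add: qpoch_coeff.simps(2) field_simps)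
    then have "?c M 1 * ?b M * (1 - Q) = - Q * (1 - Q ^ M) * ?b M"
      by (metis mult.commute mult.left_commute)
    then show ?thesis
      using 1 Suc beta_rec_recurrence[OF Q, of M a]
      by (simp add: shift_numer_coeff_def algebra_simps)
  next
    case 2
    then show ?thesis
      using Suc by (simp add: shift_numer_coeff_def qpoch_coeff_eq_0)
  next
    case 3
    define B where "B = Q ^ Suc M"
    have "?c (Suc M) (Suc M) = - B * ?c M M"
      using qpoch_coeff_Suc_Suc[OF Q, of M M] power_ne_1_of_gt_1(1)[OF Q, of "Suc M"] by (simp add: B_def)
    moreover have "Q ^ (N + 1) = Q * B" "Q ^ (2 * N + 1) = Q * B ^ 2" "Q ^ j = B"
      unfolding B_def 3 Suc power_mult[symmetric] by (simp_all add: mult.commute)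
    ultimately show ?thesis
      unfolding shift_numer_coeff_def using 3 Suc
      by (simp add: qpoch_coeff_eq_0 algebra_simps power2_eq_square del: beta_rec.simps power_Suc)
  next
    case 4
    then obtain m where "M = i + 1 + m"
      by (metis add.commute add_Suc less_imp_Suc_add plus_1_eq_Suc)
    then show ?thesis
      using shift_numer_coeff_rec_interior[OF Q Suc _ 4(1)] 4(1) by simp
  qed
qed

lemma shift_numer_Suc_diff:
  assumes Q: "1 < Q"
  shows "shift_numer Q a (Suc N) t - shift_numer Q a (Suc N) (t / Q) = t * (1 - Q ^ N) * shift_numer Q a N t"
proof (cases N)
  case 0
  then show ?thesis by (simp add: shift_numer_def shift_numer_coeff_def qpoch_coeff.simps(2))
next
  case (Suc M)
  have "shift_numer Q a (Suc N) t - shift_numer Q a (Suc N) (t / Q) =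
      (\<Sum>i\<le>N. shift_numer_coeff Q a (Suc N) (Suc i) * (t ^ Suc i - (t / Q) ^ Suc i))"
    unfolding shift_numer_def sum.atMost_Suc_shift by (simp add: sum_subtractf algebra_simps)
  also have "\<dots> = (\<Sum>i\<le>N. t * (1 - Q ^ N) * (shift_numer_coeff Q a N i * t ^ i))"
  proof (intro sum.cong refl)
    fix i
    define u where "u = Q ^ Suc i"
    have u: "u \<noteq> 0" "1 - u \<noteq> 0"
      unfolding u_def using Q power_ne_1_of_gt_1(1)[OF Q, of "Suc i"] by auto
    have coeff: "shift_numer_coeff Q a (Suc N) (Suc i) = - u * (1 - Q ^ N) / (1 - u) * shift_numer_coeff Q a N i"
      unfolding shift_numer_coeff_def u_def using qpoch_coeff_Suc_Suc[OF Q, of M i] Suc by simp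
    have dilate: "(t / Q) ^ Suc i = t ^ Suc i / u"
      unfolding u_def by (simp add: power_divide)
    show "shift_numer_coeff Q a (Suc N) (Suc i) * (t ^ Suc i - (t / Q) ^ Suc i) =
        t * (1 - Q ^ N) * (shift_numer_coeff Q a N i * t ^ i)"
      unfolding coeff dilate using u by (simp add: field_simps)
  qed
  also have "\<dots> = t * (1 - Q ^ N) * shift_numer Q a N t"
    by (simp add: shift_numer_def sum_distrib_left)
  finally show ?thesis .
qed

lemma shift_numer_rec_rhs_expand:
  "(1 - Q ^ N * t) * (1 - Q ^ (N + 1) * t) * shift_numer Q a N t - (1 - a * t + Q * t^2) * shift_numer Q a N (Q * t) =
    (\<Sum>j\<le>N + 1. (shift_numer_coeff Q a N (j + 1) * (1 - Q ^ (j + 1))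
      + shift_numer_coeff Q a N j * (a * Q ^ j - (Q ^ N + Q ^ (N + 1)))
      + (if j = 0 then 0 else shift_numer_coeff Q a N (j - 1) * (Q ^ (2 * N + 1) - Q ^ j))) * t ^ (j + 1))"
proof -
  let ?f = "shift_numer_coeff Q a N"
  have f0: "?f l = 0" if "N < l" for l
    using shift_numer_coeff_eq_0 that by blast
  have pow: "Q ^ (2 * N + 1) = Q ^ N * Q ^ (N + 1)"
    by (simp add: mult_2 flip: power_add)
  have "(1 - Q ^ N * t) * (1 - Q ^ (N + 1) * t) * shift_numer Q a N t - (1 - a * t + Q * t^2) * shift_numer Q a N (Q * t) =
      (\<Sum>l\<le>N. (1 - Q ^ N * t) * (1 - Q ^ (N + 1) * t) * (?f l * t ^ l) - (1 - a * t + Q * t^2) * (?f l * (Q ^ l * t ^ l)))"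
    by (simp add: shift_numer_def sum_distrib_left sum_subtractf power_mult_distrib)
  also have "\<dots> = (\<Sum>l\<le>N. ?f l * (1 - Q ^ l) * t ^ l) + (\<Sum>l\<le>N. ?f l * (a * Q ^ l - (Q ^ N + Q ^ (N + 1))) * t ^ (l + 1))
      + (\<Sum>l\<le>N. ?f l * (Q ^ (2 * N + 1) - Q ^ (l + 1)) * t ^ (l + 2))"
    unfolding pow sum.distrib[symmetric] by (intro sum.cong refl) (simp add: algebra_simps power2_eq_square)
  also have "(\<Sum>l\<le>N. ?f l * (1 - Q ^ l) * t ^ l) = (\<Sum>j\<le>N + 1. ?f (j + 1) * (1 - Q ^ (j + 1)) * t ^ (j + 1))"
  proof -
    have "(\<Sum>l\<le>N. ?f l * (1 - Q ^ l) * t ^ l) = (\<Sum>l\<le>Suc (Suc N). ?f l * (1 - Q ^ l) * t ^ l)"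
      by (simp add: f0)
    also have "\<dots> = (\<Sum>j\<le>Suc N. ?f (Suc j) * (1 - Q ^ Suc j) * t ^ Suc j)"
      by (simp only: sum.atMost_Suc_shift) simp
    finally show ?thesis by simp
  qed
  also have "(\<Sum>l\<le>N. ?f l * (a * Q ^ l - (Q ^ N + Q ^ (N + 1))) * t ^ (l + 1)) =
      (\<Sum>j\<le>N + 1. ?f j * (a * Q ^ j - (Q ^ N + Q ^ (N + 1))) * t ^ (j + 1))"
    by (simp add: f0)
  also have "(\<Sum>l\<le>N. ?f l * (Q ^ (2 * N + 1) - Q ^ (l + 1)) * t ^ (l + 2)) =
      (\<Sum>j\<le>N + 1. (if j = 0 then 0 else ?f (j - 1) * (Q ^ (2 * N + 1) - Q ^ j)) * t ^ (j + 1))"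
    by (simp add: sum.atMost_Suc_shift del: sum.atMost_Suc)
  finally show ?thesis
    by (simp only: sum.distrib[symmetric] distrib_right)
qed

lemma shift_numer_rec:
  assumes Q: "1 < Q"
  shows "t * (1 - Q ^ (N + 1)) * shift_numer Q a (N + 1) t =
    (1 - Q ^ N * t) * (1 - Q ^ (N + 1) * t) * shift_numer Q a N t - (1 - a * t + Q * t^2) * shift_numer Q a N (Q * t)"
  unfolding shift_numer_rec_rhs_expand unfolding shift_numer_coeff_rec[OF Q, symmetric] shift_numer_def
  by (simp add: sum_distrib_left algebra_simps)

lemma shift_ratio_power_rec:
  assumes Q: "1 < Q" and k: "1 \<le> k"
  shows "(1 - Q ^ (m + k)) * (shift_numer Q a m (Q ^ k) / qpoch Q m (Q ^ k)) =
    (1 - Q ^ k) * (shift_numer Q a m (Q ^ (k - 1)) / qpoch Q m (Q ^ (k - 1)))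
    + Q ^ k * (1 - Q ^ (m - 1)) * (shift_numer Q a (m - 1) (Q ^ k) / qpoch Q (m - 1) (Q ^ k))"
proof (cases m)
  case (Suc m')
  define s where "s = Q ^ k"
  have s: "1 - s \<noteq> 0" "s / Q = Q ^ (k - 1)" "Q ^ (m + k) = s * Q ^ Suc m'"
    unfolding s_def using power_ne_1_of_gt_1(1)[OF Q, of k] k Q Suc
    by (auto simp: power_add power_diff)
  have D: "qpoch Q m' s \<noteq> 0" "1 - s * Q ^ Suc m' \<noteq> 0"
    using qpoch_power_nonzero[OF Q, of "Suc m'" k] unfolding s_def qpoch_Suc by auto
  have "qpoch Q m (s / Q) = (1 - s) * qpoch Q m' s"
    using qpoch_Suc_shift[of Q m' "s / Q"] Q Suc by simp
  then have "(1 - s) * (shift_numer Q a m (s / Q) / qpoch Q m (s / Q)) = shift_numer Q a m (s / Q) / qpoch Q m' s"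
    using s(1) by simp
  moreover have "(1 - Q ^ (m + k)) * (shift_numer Q a m s / qpoch Q m s) = shift_numer Q a m s / qpoch Q m' s"
    using D unfolding s(3) unfolding Suc qpoch_Suc by simp
  ultimately have "(1 - Q ^ (m + k)) * (shift_numer Q a m s / qpoch Q m s) - (1 - s) * (shift_numer Q a m (s / Q) / qpoch Q m (s / Q))
      = (shift_numer Q a (Suc m') s - shift_numer Q a (Suc m') (s / Q)) / qpoch Q m' s"
    unfolding Suc by (simp add: diff_divide_distrib)
  also have "\<dots> = s * (1 - Q ^ m') * (shift_numer Q a m' s / qpoch Q m' s)"
    unfolding shift_numer_Suc_diff[OF Q] by simp
  finally show ?thesis
    unfolding Suc s_def s(2)[unfolded s_def] by (simp add: algebra_simps)
qed simp

lemma v_star_1 [simp]: "v_star Q a (Suc 0) = (Q + 1 - a) / (Q - 1)"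
  by (simp add: v_star_def zeta_star_val_def)

lemma v_star_Suc: "1 \<le> j \<Longrightarrow> v_star Q a (Suc j) = v_star Q a j * zeta_star_T Q a (1 / (Q * Q ^ j))"
  by (simp add: v_star_def zeta_star_val_def)

lemma zeta_star_T_inverse:
  fixes Q a u :: real
  assumes "Q \<noteq> 0" "u \<noteq> 0" "1 - u \<noteq> 0" "1 - Q * u \<noteq> 0"
  shows "zeta_star_T Q a (1 / (Q * u)) * (1 - Q * u) * (1 - u) = Q * u^2 - a * u + 1"
proof -
  define B where "B = Q * u - 1"
  define C where "C = u - 1"
  define A where "A = Q * u^2 - a * u + 1"
  have "B \<noteq> 0" "C \<noteq> 0"
    unfolding B_def C_def using assms by auto
  have frac: "1 - 1 / (Q * u) = B / (Q * u)" "1 - Q * (1 / (Q * u)) = C / u"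
    "1 - a * (1 / (Q * u)) + Q * (1 / (Q * u))^2 = A / (Q * u^2)" "1 - Q * u = - B" "1 - u = - C"
    unfolding A_def B_def C_def using assms by (simp_all add: field_simps power2_eq_square)
  have "zeta_star_T Q a (1 / (Q * u)) * (1 - Q * u) * (1 - u) = A / (Q * u^2) / (B / (Q * u) * (C / u)) * - B * - C"
    unfolding zeta_star_T_def frac ..
  also have "\<dots> = A"
    using assms \<open>B \<noteq> 0\<close> \<open>C \<noteq> 0\<close> by (simp add: field_simps power2_eq_square)
  finally show ?thesis
    unfolding A_def .
qed

lemma beta_star_shift_partial_fraction_identity:
  fixes Q a t u w z r :: real
  assumes nz: "1 - Q * t \<noteq> 0" "1 - u \<noteq> 0" "1 - t * u \<noteq> 0" "1 - t * (Q * u) \<noteq> 0"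
    and r: "r * (Q - 1) = Q + 1 - a" and z: "z * (1 - Q * u) * (1 - u) = Q * u^2 - a * u + 1"
  shows "t * r * (1 - Q) / ((1 - Q * t) * (1 - u)) + t * z * (1 - Q * u) / (1 - t * (Q * u))
      + t * u * (1 - w) / (1 - t * u) = (1 - u * w * t) / (1 - t * u) - (1 - a * t + Q * t^2) / ((1 - Q * t) * (1 - t * (Q * u)))"
proof -
  define d1 d2 d3 d4 where "d1 = 1 - Q * t" and "d2 = 1 - u" and "d3 = 1 - t * u" and "d4 = 1 - t * (Q * u)"
  have nz': "d1 \<noteq> 0" "d2 \<noteq> 0" "d3 \<noteq> 0" "d4 \<noteq> 0"
    using nz unfolding d1_def d2_def d3_def d4_def by simp_all
  have "(t * r * (1 - Q) / (d1 * d2) + t * z * (1 - Q * u) / d4 + t * u * (1 - w) / d3) * (d1 * d2 * d3 * d4) =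
      t * r * (1 - Q) * d3 * d4 + t * z * (1 - Q * u) * d1 * d2 * d3 + t * u * (1 - w) * d1 * d2 * d4"
    using nz' by (simp add: field_simps)
  also have "\<dots> = (1 - u * w * t) * d1 * d2 * d4 - (1 - a * t + Q * t^2) * d2 * d3"
    unfolding d1_def d2_def d3_def d4_def using r z by algebra
  also have "\<dots> = ((1 - u * w * t) / d3 - (1 - a * t + Q * t^2) / (d1 * d4)) * (d1 * d2 * d3 * d4)"
    using nz' by (simp add: field_simps)
  finally show ?thesis
    unfolding d1_def[symmetric] d2_def[symmetric] d3_def[symmetric] d4_def[symmetric]
    using nz' by simp
qed

lemma beta_star_shift_rec_in_t_0:
  assumes "1 < Q" "1 - Q * t \<noteq> 0"
  shows "t * (1 - Q) * beta_star_shift Q a 1 t = (1 - t) - (1 - a * t + Q * t^2) / (1 - Q * t)"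
proof -
  define d e where "d = 1 - Q * t" and "e = Q - 1"
  have de: "d \<noteq> 0" "e \<noteq> 0"
    unfolding d_def e_def using assms by simp_all
  have "beta_star_shift Q a 1 t = (Q + 1 - a) / e / d"
    by (simp add: beta_star_shift_rec d_def e_def mult.commute)
  moreover have "t * (1 - Q) * ((Q + 1 - a) / e / d) * (d * e) = ((1 - t) * d - (1 - a * t + Q * t^2)) / d * (d * e)"
    using de by (simp add: field_simps) (simp add: d_def e_def algebra_simps power2_eq_square)
  ultimately show ?thesis
    using de by (simp add: d_def[symmetric] diff_divide_distrib)
qed

definition shift_weight :: "real \<Rightarrow> real \<Rightarrow> nat \<Rightarrow> nat \<Rightarrow> real" where
  "shift_weight Q a N j = v_star Q a j * beta_star_shift Q a (N - j) (Q ^ j)"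

lemma beta_star_shift_eq_sum_weights:
  "0 < N \<Longrightarrow> beta_star_shift Q a N s = (\<Sum>j = 1..N. shift_weight Q a N j / (1 - s * Q ^ j))"
  by (simp add: beta_star_shift_rec shift_weight_def)

lemma beta_star_shift_rec_lhs_part:
  assumes "0 < N"
  shows "(\<Sum>k = 1..Suc N. t * v_star Q a k / (1 - t * Q ^ k) * ((1 - Q ^ k) * beta_star_shift Q a (Suc N - k) (Q ^ (k - 1)))) =
    (\<Sum>j = 1..N. shift_weight Q a N j * (t * ((Q + 1 - a) / (Q - 1)) * (1 - Q) / ((1 - Q * t) * (1 - Q ^ j))
      + t * zeta_star_T Q a (1 / (Q * Q ^ j)) * (1 - Q * Q ^ j) / (1 - t * (Q * Q ^ j))))"
proof -
  let ?G = "beta_star_shift Q a" and ?v = "v_star Q a" and ?A = "shift_weight Q a N"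
  let ?f = "\<lambda>k. t * ?v k / (1 - t * Q ^ k) * ((1 - Q ^ k) * ?G (Suc N - k) (Q ^ (k - 1)))"
  have "(\<Sum>k = 1..Suc N. ?f k) = ?f 1 + (\<Sum>k = Suc 1..Suc N. ?f k)"
    by (rule sum.atLeast_Suc_atMost) simp
  also have "(\<Sum>k = Suc 1..Suc N. ?f k) = (\<Sum>j = 1..N. ?f (Suc j))"
    by (rule sum.shift_bounds_cl_Suc_ivl)
  also have "?f 1 = (\<Sum>j = 1..N. ?A j * (t * ((Q + 1 - a) / (Q - 1)) * (1 - Q) / ((1 - Q * t) * (1 - Q ^ j))))"
    using beta_star_shift_eq_sum_weights[OF assms, of Q a 1]
    by (simp add: sum_distrib_left sum_divide_distrib divide_inverse mult_ac)
  also have "(\<Sum>j = 1..N. ?f (Suc j)) =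
      (\<Sum>j = 1..N. ?A j * (t * zeta_star_T Q a (1 / (Q * Q ^ j)) * (1 - Q * Q ^ j) / (1 - t * (Q * Q ^ j))))"
    by (intro sum.cong refl) (simp add: shift_weight_def v_star_Suc divide_inverse mult_ac)
  finally show ?thesis
    by (simp add: sum.distrib distrib_left)
qed

lemma beta_star_shift_rec_lhs:
  assumes "0 < N"
    and E: "\<forall>k\<in>{1..Suc N}. (1 - Q ^ Suc N) * beta_star_shift Q a (Suc N - k) (Q ^ k) =
      (1 - Q ^ k) * beta_star_shift Q a (Suc N - k) (Q ^ (k - 1))
      + Q ^ k * (1 - Q ^ (N - k)) * beta_star_shift Q a (N - k) (Q ^ k)"
  shows "t * (1 - Q ^ Suc N) * beta_star_shift Q a (Suc N) t =
    (\<Sum>j = 1..N. shift_weight Q a N j * (t * ((Q + 1 - a) / (Q - 1)) * (1 - Q) / ((1 - Q * t) * (1 - Q ^ j))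
      + t * zeta_star_T Q a (1 / (Q * Q ^ j)) * (1 - Q * Q ^ j) / (1 - t * (Q * Q ^ j))
      + t * Q ^ j * (1 - Q ^ (N - j)) / (1 - t * Q ^ j)))"
proof -
  let ?G = "beta_star_shift Q a" and ?v = "v_star Q a"
  have "t * (1 - Q ^ Suc N) * ?G (Suc N) t =
      (\<Sum>k = 1..Suc N. t * ?v k / (1 - t * Q ^ k) * ((1 - Q ^ Suc N) * ?G (Suc N - k) (Q ^ k)))"
    unfolding beta_star_shift_rec[of "Suc N", OF zero_less_Suc] sum_distrib_left
    by (intro sum.cong refl) (simp add: divide_inverse mult_ac)
  also have "\<dots> = (\<Sum>k = 1..Suc N. t * ?v k / (1 - t * Q ^ k) * ((1 - Q ^ k) * ?G (Suc N - k) (Q ^ (k - 1))))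
      + (\<Sum>k = 1..Suc N. t * ?v k / (1 - t * Q ^ k) * (Q ^ k * (1 - Q ^ (N - k)) * ?G (N - k) (Q ^ k)))"
    unfolding sum.distrib[symmetric]
  proof (intro sum.cong refl)
    fix k assume k: "k \<in> {1..Suc N}"
    show "t * ?v k / (1 - t * Q ^ k) * ((1 - Q ^ Suc N) * ?G (Suc N - k) (Q ^ k)) =
        t * ?v k / (1 - t * Q ^ k) * ((1 - Q ^ k) * ?G (Suc N - k) (Q ^ (k - 1)))
        + t * ?v k / (1 - t * Q ^ k) * (Q ^ k * (1 - Q ^ (N - k)) * ?G (N - k) (Q ^ k))"
      unfolding E[rule_format, OF k] by (rule distrib_left)
  qed
  also have "(\<Sum>k = 1..Suc N. t * ?v k / (1 - t * Q ^ k) * (Q ^ k * (1 - Q ^ (N - k)) * ?G (N - k) (Q ^ k))) =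
      (\<Sum>j = 1..N. shift_weight Q a N j * (t * Q ^ j * (1 - Q ^ (N - j)) / (1 - t * Q ^ j)))"
    by (simp add: shift_weight_def divide_inverse mult_ac)
  finally show ?thesis
    unfolding beta_star_shift_rec_lhs_part[OF assms(1)] by (simp add: sum.distrib distrib_left)
qed

lemma beta_star_shift_rec_rhs:
  assumes "0 < N"
  shows "(1 - Q ^ N * t) * beta_star_shift Q a N t - (1 - a * t + Q * t^2) * beta_star_shift Q a N (Q * t) / (1 - Q * t) =
    (\<Sum>j = 1..N. shift_weight Q a N j * ((1 - Q ^ j * Q ^ (N - j) * t) / (1 - t * Q ^ j)
      - (1 - a * t + Q * t^2) / ((1 - Q * t) * (1 - t * (Q * Q ^ j)))))"
proof -
  have G_Qt: "beta_star_shift Q a N (Q * t) = (\<Sum>j = 1..N. shift_weight Q a N j / (1 - t * (Q * Q ^ j)))"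
    unfolding beta_star_shift_eq_sum_weights[OF assms] by (simp add: mult_ac)
  have split: "x * (B / d) - P * (B / d') / e = B * (x / d - P / (e * d'))" for x B d d' P e :: real
    by (simp add: divide_inverse inverse_mult_distrib algebra_simps)
  show ?thesis
    unfolding G_Qt beta_star_shift_eq_sum_weights[OF assms, of Q a t]
      sum_distrib_left sum_divide_distrib sum_subtractf[symmetric]
  proof (intro sum.cong refl)
    fix j assume "j \<in> {1..N}"
    then have "Q ^ j * Q ^ (N - j) = Q ^ N"
      by (simp flip: power_add)
    then show "(1 - Q ^ N * t) * (shift_weight Q a N j / (1 - t * Q ^ j))
        - (1 - a * t + Q * t^2) * (shift_weight Q a N j / (1 - t * (Q * Q ^ j))) / (1 - Q * t) =
        shift_weight Q a N j * ((1 - Q ^ j * Q ^ (N - j) * t) / (1 - t * Q ^ j)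
          - (1 - a * t + Q * t^2) / ((1 - Q * t) * (1 - t * (Q * Q ^ j))))"
      unfolding split by simp
  qed
qed

lemma beta_star_shift_rec_in_t:
  assumes Q: "1 < Q"
    and E: "\<forall>k\<in>{1..Suc N}. (1 - Q ^ Suc N) * beta_star_shift Q a (Suc N - k) (Q ^ k) =
      (1 - Q ^ k) * beta_star_shift Q a (Suc N - k) (Q ^ (k - 1))
      + Q ^ k * (1 - Q ^ (N - k)) * beta_star_shift Q a (N - k) (Q ^ k)"
    and nz: "\<And>k. k \<in> {1..Suc N} \<Longrightarrow> 1 - t * Q ^ k \<noteq> 0"
  shows "t * (1 - Q ^ Suc N) * beta_star_shift Q a (Suc N) t =
    (1 - Q ^ N * t) * beta_star_shift Q a N t - (1 - a * t + Q * t^2) * beta_star_shift Q a N (Q * t) / (1 - Q * t)"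
proof (cases "N = 0")
  case True
  then show ?thesis
    using beta_star_shift_rec_in_t_0[OF Q, of t a] nz[of 1] by (simp add: mult.commute)
next
  case False
  then have N: "0 < N" by simp
  show ?thesis
    unfolding beta_star_shift_rec_lhs[OF N E] beta_star_shift_rec_rhs[OF N]
  proof (intro sum.cong refl arg_cong[where f = "(*) (shift_weight Q a N _)"])
    fix j assume j: "j \<in> {1..N}"
    have Qj: "1 - Q ^ j \<noteq> 0"
      using power_ne_1_of_gt_1(1)[OF Q, of j] j by auto
    show "t * ((Q + 1 - a) / (Q - 1)) * (1 - Q) / ((1 - Q * t) * (1 - Q ^ j))
        + t * zeta_star_T Q a (1 / (Q * Q ^ j)) * (1 - Q * Q ^ j) / (1 - t * (Q * Q ^ j))
        + t * Q ^ j * (1 - Q ^ (N - j)) / (1 - t * Q ^ j) =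
        (1 - Q ^ j * Q ^ (N - j) * t) / (1 - t * Q ^ j) - (1 - a * t + Q * t^2) / ((1 - Q * t) * (1 - t * (Q * Q ^ j)))"
    proof (rule beta_star_shift_partial_fraction_identity)
      show "1 - Q * t \<noteq> 0" "1 - t * Q ^ j \<noteq> 0" "1 - t * (Q * Q ^ j) \<noteq> 0"
        using nz[of 1] nz[of j] nz[of "Suc j"] j by (auto simp: mult.commute)
      show "(Q + 1 - a) / (Q - 1) * (Q - 1) = Q + 1 - a"
        using Q by simp
      show "zeta_star_T Q a (1 / (Q * Q ^ j)) * (1 - Q * Q ^ j) * (1 - Q ^ j) = Q * (Q ^ j)^2 - a * Q ^ j + 1"
        using Qj power_ne_1_of_gt_1(1)[OF Q, of "Suc j"] Q by (intro zeta_star_T_inverse) auto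
    qed (rule Qj)
  qed
qed

lemma qpoch_Suc_nonzero:
  assumes "qpoch Q (Suc N) t \<noteq> 0"
  shows "qpoch Q N t \<noteq> 0" "qpoch Q N (Q * t) \<noteq> 0" "1 - Q ^ Suc N * t \<noteq> 0" "1 - Q * t \<noteq> 0"
  using assms qpoch_Suc[of Q N t] qpoch_Suc_shift[of Q N t] by (auto simp: mult.commute)

lemma shift_ratio_rec_in_t:
  assumes Q: "1 < Q" and nz: "qpoch Q (Suc N) t \<noteq> 0"
  shows "t * (1 - Q ^ Suc N) * (shift_numer Q a (Suc N) t / qpoch Q (Suc N) t) =
    (1 - Q ^ N * t) * (shift_numer Q a N t / qpoch Q N t)
    - (1 - a * t + Q * t^2) * (shift_numer Q a N (Q * t) / qpoch Q N (Q * t)) / (1 - Q * t)"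
proof -
  let ?P = "shift_numer Q a" and ?D = "qpoch Q"
  have D: "?D (Suc N) t = ?D N t * (1 - Q ^ Suc N * t)" "?D (Suc N) t = (1 - Q * t) * ?D N (Q * t)"
    using qpoch_Suc[of Q N t] qpoch_Suc_shift[of Q N t] by (simp_all add: mult.commute)
  have e1: "(1 - Q ^ N * t) * (?P N t / ?D N t) = (1 - Q ^ N * t) * (1 - Q ^ Suc N * t) * ?P N t / ?D (Suc N) t"
    using qpoch_Suc_nonzero[OF nz] unfolding D(1) by simp
  have e2: "(1 - a * t + Q * t^2) * (?P N (Q * t) / ?D N (Q * t)) / (1 - Q * t) =
      (1 - a * t + Q * t^2) * ?P N (Q * t) / ?D (Suc N) t"
    using qpoch_Suc_nonzero[OF nz] unfolding D(2) by simp
  have rec: "t * (1 - Q ^ Suc N) * ?P (Suc N) t =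
      (1 - Q ^ N * t) * (1 - Q ^ Suc N * t) * ?P N t - (1 - a * t + Q * t^2) * ?P N (Q * t)"
    using shift_numer_rec[OF Q, of t N a] by simp
  show ?thesis
    unfolding e1 e2 diff_divide_distrib[symmetric] rec[symmetric] by (rule times_divide_eq_right)
qed

text \<open>The hypothesis \<open>t \<noteq> 0\<close> is needed because \<open>beta_star_shift_rec_in_t\<close> only determines
  \<open>t * beta_star_shift Q a n t\<close>; the value at \<open>0\<close> is recovered by continuity.\<close>

lemma beta_star_shift_closed_form:
  assumes Q: "1 < Q"
  shows "t \<noteq> 0 \<Longrightarrow> qpoch Q n t \<noteq> 0 \<Longrightarrow> beta_star_shift Q a n t = shift_numer Q a n t / qpoch Q n t"
proof (induction n arbitrary: t rule: less_induct)
  case (less n)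
  show ?case
  proof (cases n)
    case (Suc N)
    let ?G = "beta_star_shift Q a" and ?P = "shift_numer Q a" and ?D = "qpoch Q"
    have IH_power: "?G m (Q ^ k) = ?P m (Q ^ k) / ?D m (Q ^ k)" if "m < n" for m k
      using less.IH[OF that] Q qpoch_power_nonzero[OF Q] by simp
    have nz: "?D (Suc N) t \<noteq> 0"
      using less.prems(2) Suc by simp
    have "t * (1 - Q ^ Suc N) * ?G (Suc N) t =
        (1 - Q ^ N * t) * ?G N t - (1 - a * t + Q * t^2) * ?G N (Q * t) / (1 - Q * t)"
    proof (rule beta_star_shift_rec_in_t[OF Q], intro ballI)
      fix k assume k: "k \<in> {1..Suc N}"
      show "1 - t * Q ^ k \<noteq> 0"
        using nz k by (simp add: qpoch_nonzero_iff)
      have "Suc N - k + k = Suc N" "Suc N - k - 1 = N - k" "Suc N - k < n" "N - k < n"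
        using k Suc by auto
      then show "(1 - Q ^ Suc N) * ?G (Suc N - k) (Q ^ k) =
          (1 - Q ^ k) * ?G (Suc N - k) (Q ^ (k - 1)) + Q ^ k * (1 - Q ^ (N - k)) * ?G (N - k) (Q ^ k)"
        using shift_ratio_power_rec[OF Q, of k "Suc N - k" a] k
        by (simp only: IH_power) simp
    qed
    also have "\<dots> = (1 - Q ^ N * t) * (?P N t / ?D N t)
        - (1 - a * t + Q * t^2) * (?P N (Q * t) / ?D N (Q * t)) / (1 - Q * t)"
      using less.IH[of N t] less.IH[of N "Q * t"] qpoch_Suc_nonzero[OF nz] less.prems(1) Q Suc by simp
    also have "\<dots> = t * (1 - Q ^ Suc N) * (?P (Suc N) t / ?D (Suc N) t)"
      by (rule shift_ratio_rec_in_t[OF Q nz, symmetric])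
    finally have "t * (1 - Q ^ Suc N) * ?G (Suc N) t = t * (1 - Q ^ Suc N) * (?P (Suc N) t / ?D (Suc N) t)" .
    moreover have "t * (1 - Q ^ Suc N) \<noteq> 0"
      using less.prems(1) power_ne_1_of_gt_1(1)[OF Q, of "Suc N"] by simp
    ultimately show ?thesis
      unfolding Suc using mult_left_cancel by blast
  qed simp
qed

lemma beta_star_eq_beta_rec:
  assumes Q: "1 < Q"
  shows "beta_star Q a n = beta_rec Q a n"
proof -
  have "isCont (\<lambda>t. composition_weight Q a ks * (if ks = [] then 1 else 1 / (1 - t * Q ^ hd ks))) 0" for ks
    by (cases "ks = []") simp_all
  then have "isCont (beta_star_shift Q a n) 0"
    unfolding beta_star_shift_def by (intro isCont_sum) auto
  then have lim_shift: "(beta_star_shift Q a n \<longlongrightarrow> beta_star_shift Q a n 0) (at 0)"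
    by (simp add: isCont_def)
  have "isCont (\<lambda>t. shift_numer Q a n t / qpoch Q n t) 0"
    unfolding shift_numer_def qpoch_def by (intro continuous_intros) simp
  then have "((\<lambda>t. shift_numer Q a n t / qpoch Q n t) \<longlongrightarrow> shift_numer Q a n 0 / qpoch Q n 0) (at 0)"
    by (simp add: isCont_def)
  moreover have "\<forall>\<^sub>F t in at 0. shift_numer Q a n t / qpoch Q n t = beta_star_shift Q a n t"
    unfolding eventually_at using Q
    by (intro exI[of _ "1 / Q ^ n"])
      (auto simp: dist_real_def beta_star_shift_closed_form qpoch_nonzero_near_0)
  ultimately have "(beta_star_shift Q a n \<longlongrightarrow> shift_numer Q a n 0 / qpoch Q n 0) (at 0)"
    by (rule Lim_transform_eventually)
  then have "beta_star_shift Q a n 0 = shift_numer Q a n 0 / qpoch Q n 0"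
    using LIM_unique[OF lim_shift] by blast
  then show ?thesis
    by (simp add: beta_star_shift_at_0 shift_numer_at_0 qpoch_def)
qed

lemma prime_power_gt_1: "prime_power q \<Longrightarrow> 1 < q"
  unfolding prime_power_def using prime_gt_1_nat one_less_power by blast

theorem theorem3p4:
  fixes q :: nat and ns :: "nat list" and a Q :: real
  assumes "prime_power q"
    and "\<forall>n\<in>set ns. 0 < n"
    and "Q = real q ^ prod_list ns"
  shows "\<forall>n. (\<lambda>K. fps_nth (\<Prod>k = 1..K. prod_factor Q a k) n) \<longlonglongrightarrow> beta_star Q a n"
proof
  fix n
  have "prod_list ns \<noteq> 0"
    using assms(2) by (auto simp: prod_list_zero_iff)
  then have Q: "1 < Q"
    using prime_power_gt_1[OF assms(1)] assms(3) by (simp add: one_less_power)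
  show "(\<lambda>K. fps_nth (\<Prod>k = 1..K. prod_factor Q a k) n) \<longlonglongrightarrow> beta_star Q a n"
    unfolding beta_star_eq_beta_rec[OF Q] by (rule partial_product_tendsto_beta_rec[OF Q])
qed

end
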